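(* Let $\alpha>0$, $\tau=\beta/\alpha\in[0,1)$, $D_0\in\mathbb{R}$, and $p^a_1,p^a_2,p^d_1,p^d_2\in\mathbb{R}$. Let $$X=\frac12\begin{pmatrix}0&0&-1&0\\0&0&0&-1\\-1&\tau&0&\tau\\\tau&-1&\tau&0\end{pmatrix},\qquad Y=\begin{pmatrix}\frac{D_0-(\alpha-\beta)p^d_1}{2(\alpha-\beta)}\\[2pt]\frac{D_0-(\alpha-\beta)p^d_2}{2(\alpha-\beta)}\\[2pt]\frac{D_0-\alpha(p^a_1-p^d_1)}{2\alpha}\\[2pt]\frac{D_0-\alpha(p^a_2-p^d_2)}{2\alpha}\end{pmatrix}.$$ Then $I-X$ is invertible. Moreover, for every initial vector $p_0\in\mathbb{R}^4$, the sequence defined by $p_{t+1}=Xp_t+Y$ converges to $(I-X)^{-1}Y$.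
   Context: The vector $p_t=(p^s_{1t},p^s_{2t},p^c_{1t},p^c_{2t})$ represents the prices set on day $t$ in the two-CP ex ante regulated model. The iteration is the simultaneous best-response update in which each player sets its price using the unconstrained linear demands $d_i=D_0-\alpha p_i+\beta p_j$. *)

theory Defs
  imports "HOL-Analysis.Analysis"
begin

text \<open>Iteration matrix X (indices 1..4 of the paper correspond to 1..4 of type 4).\<close>
definition X_mat :: "real \<Rightarrow> real^4^4" where
  "X_mat \<tau> = (1/2) *\<^sub>R (vector [
      vector [0, 0, -1, 0],
      vector [0, 0, 0, -1],
      vector [-1, \<tau>, 0, \<tau>],
      vector [\<tau>, -1, \<tau>, 0]])"

definition Y_vec :: "real \<Rightarrow> real \<Rightarrow> real \<Rightarrow> real \<Rightarrow> real \<Rightarrow> real \<Rightarrow> real \<Rightarrow> real^4" where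
  "Y_vec \<alpha> \<beta> D0 pa1 pa2 pd1 pd2 = vector [
      (D0 - (\<alpha> - \<beta>) * pd1) / (2 * (\<alpha> - \<beta>)),
      (D0 - (\<alpha> - \<beta>) * pd2) / (2 * (\<alpha> - \<beta>)),
      (D0 - \<alpha> * (pa1 - pd1)) / (2 * \<alpha>),
      (D0 - \<alpha> * (pa2 - pd2)) / (2 * \<alpha>)]"

fun price_iter :: "real^4^4 \<Rightarrow> real^4 \<Rightarrow> real^4 \<Rightarrow> nat \<Rightarrow> real^4" where
  "price_iter X Y p0 0 = p0"
| "price_iter X Y p0 (Suc t) = X *v price_iter X Y p0 t + Y"

end

theory Submission imports Defs begin

text \<open>\<open>X\<close> is a contraction for the weighted maximum norm
  \<open>V e = max ((1 + \<tau>) \<bar>e\<^sub>1\<bar>, (1 + \<tau>) \<bar>e\<^sub>2\<bar>, \<bar>e\<^sub>3\<bar>, \<bar>e\<^sub>4\<bar>)\<close> with factor \<open>(1 + \<tau>) / 2 < 1\<close>: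
  the first two rows halve \<open>e\<^sub>3\<close> and \<open>e\<^sub>4\<close>, which the weight turns into the factor \<open>(1 + \<tau>) / 2\<close>,
  and the last two rows are half of \<open>\<plusminus>e\<^sub>i \<plusminus> \<tau> e\<^sub>j \<plusminus> \<tau> e\<^sub>k\<close> with \<open>i, j \<le> 2 < k\<close>, bounded by
  \<open>(1/(1 + \<tau>) + \<tau>/(1 + \<tau>) + \<tau>) V e / 2 = (1 + \<tau>) V e / 2\<close>. A contraction has no nonzero fixed
  point, so \<open>I - X\<close> is invertible, and the distance of the iterates to the fixed point
  \<open>(I - X)\<^sup>-\<^sup>1 Y\<close> decays geometrically.\<close>

lemma matrix_inv_right:
  fixes A :: "'a::comm_semiring_1^'n^'n"
  assumes "invertible A"
  shows "A ** matrix_inv A = mat 1"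
proof -
  have "\<exists>B. A ** B = mat 1 \<and> B ** A = mat 1"
    using assms unfolding invertible_def .
  then show ?thesis
    unfolding matrix_inv_def by (rule someI_ex[THEN conjunct1])
qed

lemma matrix_inv_solves:
  fixes A :: "'a::comm_semiring_1^'n^'n"
  assumes "invertible A"
  shows "A *v (matrix_inv A *v y) = y"
  by (simp add: matrix_vector_mul_assoc matrix_inv_right[OF assms])

locale matrix_contraction =
  fixes A :: "real^'n^'n" and V :: "real^'n \<Rightarrow> real" and q K :: real
  assumes contract: "\<And>x. V (A *v x) \<le> q * V x"
    and q_nonneg: "0 \<le> q" and q_less_1: "q < 1"
    and norm_le: "\<And>x. norm x \<le> K * V x" and K_nonneg: "0 \<le> K"
begin

lemma fixed_point_eq_0:
  assumes "A *v x = x"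
  shows "x = 0"
proof -
  have "(1 - q) * V x \<le> 0"
    using contract[of x] assms by (simp add: algebra_simps)
  then have "V x \<le> 0"
    using q_less_1 by (simp add: mult_le_0_iff)
  then have "norm x \<le> 0"
    using norm_le[of x] K_nonneg by (meson mult_nonneg_nonpos order_trans)
  then show ?thesis by simp
qed

lemma invertible_id_minus: "invertible (mat 1 - A)"
  unfolding invertible_left_inverse matrix_left_invertible_ker
  using fixed_point_eq_0 by (simp add: matrix_vector_mult_diff_rdistrib)

lemma affine_iteration_tendsto_fixed_point:
  assumes iter: "\<And>t. x (Suc t) = A *v x t + Y" and fixed: "A *v p + Y = p"
  shows "x \<longlonglongrightarrow> p"
proof -
  define e where "e t = x t - p" for t
  have e_Suc: "e (Suc t) = A *v e t" for t
    unfolding e_def using iter fixed by (simp add: matrix_vector_mult_diff_distrib algebra_simps)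
  have V_e: "V (e t) \<le> q ^ t * V (e 0)" for t
  proof (induction t)
    case (Suc t)
    have "V (e (Suc t)) \<le> q * V (e t)"
      using contract e_Suc by simp
    also have "\<dots> \<le> q * (q ^ t * V (e 0))"
      using Suc q_nonneg by (rule mult_left_mono)
    finally show ?case by simp
  qed simp
  have bound: "norm (e t) \<le> K * V (e 0) * q ^ t" for t
  proof -
    have "norm (e t) \<le> K * V (e t)"
      by (rule norm_le)
    also have "\<dots> \<le> K * (q ^ t * V (e 0))"
      using V_e K_nonneg by (rule mult_left_mono)
    finally show ?thesis
      by (simp add: algebra_simps)
  qed
  have "(\<lambda>t. K * V (e 0) * q ^ t) \<longlonglongrightarrow> 0"
    using q_nonneg q_less_1 by (intro tendsto_mult_right_zero LIMSEQ_power_zero) auto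
  then have "e \<longlonglongrightarrow> 0"
    by (rule Lim_null_comparison[rotated]) (use bound in auto)
  then show ?thesis
    unfolding e_def by (rule LIM_zero_cancel)
qed

lemma affine_iteration_tendsto:
  assumes "\<And>t. x (Suc t) = A *v x t + Y"
  shows "x \<longlonglongrightarrow> matrix_inv (mat 1 - A) *v Y"
proof (rule affine_iteration_tendsto_fixed_point[where x = x, OF assms])
  have "(mat 1 - A) *v (matrix_inv (mat 1 - A) *v Y) = Y"
    by (rule matrix_inv_solves[OF invertible_id_minus])
  then show "A *v (matrix_inv (mat 1 - A) *v Y) + Y = matrix_inv (mat 1 - A) *v Y"
    by (simp add: matrix_vector_mult_diff_rdistrib algebra_simps)
qed

end

definition weighted_max_norm :: "real \<Rightarrow> real^4 \<Rightarrow> real" where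
  "weighted_max_norm w e = max (max (w * \<bar>e$1\<bar>) (w * \<bar>e$2\<bar>)) (max \<bar>e$3\<bar> \<bar>e$4\<bar>)"

lemma abs_le_weighted_max_norm:
  assumes "1 \<le> w"
  shows "\<bar>e$i\<bar> \<le> weighted_max_norm w e"
proof -
  have "\<bar>e$1\<bar> \<le> w * \<bar>e$1\<bar>" "\<bar>e$2\<bar> \<le> w * \<bar>e$2\<bar>"
    using assms by (simp_all add: mult_le_cancel_right1)
  then show ?thesis
    using exhaust_4[of i] by (auto simp: weighted_max_norm_def le_max_iff_disj)
qed

lemma norm_le_weighted_max_norm:
  assumes "1 \<le> w"
  shows "norm e \<le> 4 * weighted_max_norm w e"
proof -
  have "norm e \<le> (\<Sum>i\<in>UNIV. \<bar>e$i\<bar>)"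
    by (rule norm_le_l1_cart)
  also have "\<dots> \<le> (\<Sum>i\<in>(UNIV::4 set). weighted_max_norm w e)"
    by (intro sum_mono abs_le_weighted_max_norm assms)
  finally show ?thesis by simp
qed

lemma X_mat_mult_components:
  fixes e :: "real^4"
  shows "(X_mat t *v e) $ 1 = - e$3 / 2"
    and "(X_mat t *v e) $ 2 = - e$4 / 2"
    and "(X_mat t *v e) $ 3 = (- e$1 + t * e$2 + t * e$4) / 2"
    and "(X_mat t *v e) $ 4 = (t * e$1 - e$2 + t * e$3) / 2"
  by (simp_all add: X_mat_def matrix_vector_mult_def sum_4 vector_def field_simps)

lemma weighted_max_norm_le_iff:
  "weighted_max_norm w e \<le> M \<longleftrightarrow>
    w * \<bar>e$1\<bar> \<le> M \<and> w * \<bar>e$2\<bar> \<le> M \<and> \<bar>e$3\<bar> \<le> M \<and> \<bar>e$4\<bar> \<le> M"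
  by (auto simp: weighted_max_norm_def)

lemma weighted_max_norm_X_mat_contract:
  assumes "0 \<le> t"
  shows "weighted_max_norm (1 + t) (X_mat t *v e) \<le> (1 + t) / 2 * weighted_max_norm (1 + t) e"
proof -
  let ?V = "weighted_max_norm (1 + t) e"
  have lower: "\<bar>e$3\<bar> \<le> ?V" "\<bar>e$4\<bar> \<le> ?V"
    and upper: "(1 + t) * \<bar>e$1\<bar> \<le> ?V" "(1 + t) * \<bar>e$2\<bar> \<le> ?V"
    using order_refl[of ?V] unfolding weighted_max_norm_le_iff by auto
  have halved: "(1 + t) * \<bar>- a / 2\<bar> \<le> (1 + t) / 2 * ?V" if "\<bar>a\<bar> \<le> ?V" for a
    using that assms by (simp add: mult_left_mono)
  have mixed: "\<bar>(a + t * b + t * d) / 2\<bar> \<le> (1 + t) / 2 * ?V"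
    if "(1 + t) * \<bar>a\<bar> \<le> ?V" "(1 + t) * \<bar>b\<bar> \<le> ?V" "\<bar>d\<bar> \<le> ?V" for a b d
  proof -
    have "\<bar>a + t * b + t * d\<bar> \<le> \<bar>a\<bar> + \<bar>t * b\<bar> + \<bar>t * d\<bar>"
      by linarith
    then have "(1 + t) * \<bar>a + t * b + t * d\<bar> \<le> (1 + t) * (\<bar>a\<bar> + t * \<bar>b\<bar> + t * \<bar>d\<bar>)"
      using assms by (intro mult_left_mono) (auto simp: abs_mult)
    also have "\<dots> = (1 + t) * \<bar>a\<bar> + t * ((1 + t) * \<bar>b\<bar>) + t * (1 + t) * \<bar>d\<bar>"
      by (simp add: algebra_simps)
    also have "\<dots> \<le> ?V + t * ?V + t * (1 + t) * ?V"
      using that assms by (intro add_mono mult_left_mono) auto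
    also have "\<dots> = (1 + t) * ((1 + t) * ?V)"
      by (simp add: algebra_simps)
    finally show ?thesis
      using assms by simp
  qed
  have row3: "\<bar>(- e$1 + t * e$2 + t * e$4) / 2\<bar> \<le> (1 + t) / 2 * ?V"
    by (rule mixed) (use upper lower in simp_all)
  have "(t * e$1 - e$2 + t * e$3) / 2 = (- e$2 + t * e$1 + t * e$3) / 2"
    by simp
  then have row4: "\<bar>(t * e$1 - e$2 + t * e$3) / 2\<bar> \<le> (1 + t) / 2 * ?V"
    by (simp only:) (rule mixed, use upper lower in simp_all)
  show ?thesis
    unfolding weighted_max_norm_le_iff X_mat_mult_components
    by (intro conjI halved[OF lower(1)] halved[OF lower(2)] row3 row4)
qed

lemma matrix_contraction_X_mat:
  assumes "0 \<le> t" "t < 1"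
  shows "matrix_contraction (X_mat t) (weighted_max_norm (1 + t)) ((1 + t) / 2) 4"
proof
  show "weighted_max_norm (1 + t) (X_mat t *v x) \<le> (1 + t) / 2 * weighted_max_norm (1 + t) x" for x
    using assms(1) by (rule weighted_max_norm_X_mat_contract)
  show "norm x \<le> 4 * weighted_max_norm (1 + t) x" for x
    using assms(1) by (intro norm_le_weighted_max_norm) simp
qed (use assms in auto)

theorem theorem9:
  fixes \<alpha> \<beta> \<tau> D0 pa1 pa2 pd1 pd2 :: real
  assumes "\<alpha> > 0" and "\<tau> = \<beta> / \<alpha>" and "0 \<le> \<tau>" and "\<tau> < 1"
  shows "invertible (mat 1 - X_mat \<tau>) \<and>
    (\<forall>p0 :: real^4.
       price_iter (X_mat \<tau>) (Y_vec \<alpha> \<beta> D0 pa1 pa2 pd1 pd2) p0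
         \<longlonglongrightarrow> matrix_inv (mat 1 - X_mat \<tau>) *v Y_vec \<alpha> \<beta> D0 pa1 pa2 pd1 pd2)"
proof -
  interpret matrix_contraction "X_mat \<tau>" "weighted_max_norm (1 + \<tau>)" "(1 + \<tau>) / 2" 4
    using matrix_contraction_X_mat assms(3,4) .
  show ?thesis
    using invertible_id_minus affine_iteration_tendsto[of "price_iter _ _ _"] by simp
qed

end
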